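(* Every simple $\mathcal K_{m,n}$-module is strictly simple, i.e. it has no $\mathcal K_{m,n}$-invariant subspaces (graded or not) other than $0$ and itself.
   Context: Fix $(m,n)\in\mathbb Z_+^2\setminus\{(0,0)\}$. $\mathcal K_{m,n}$ is the Weyl superalgebra: the associative superalgebra generated by even elements $t_1,\dots,t_m,\partial_{t_1},\dots,\partial_{t_m}$ and odd elements $\xi_1,\dots,\xi_n,\partial_{\xi_1},\dots,\partial_{\xi_n}$, acting as multiplication and (super)derivation operators on $\mathbb C[t_1,\dots,t_m]\otimes\Lambda(\xi_1,\dots,\xi_n)$ (equivalently, the subalgebra of $\bar U$ generated by $A$ and $\Delta$). Modules are $\mathbb Z_2$-graded, and "simple" means having no nontrivial $\mathbb Z_2$-graded submodules. *)

theory Defs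
  imports Main Complex_Main
begin

text \<open>T i, Dt i (i < m) are the actions of the even generators t_i, d/dt_i;
  X i, Dx i (i < n) are the actions of the odd generators xi_i, d/dxi_i.\<close>

definition weyl_super_module ::
  "nat \<Rightarrow> nat \<Rightarrow> (complex \<Rightarrow> 'v::ab_group_add \<Rightarrow> 'v)
   \<Rightarrow> (nat \<Rightarrow> 'v \<Rightarrow> 'v) \<Rightarrow> (nat \<Rightarrow> 'v \<Rightarrow> 'v) \<Rightarrow> (nat \<Rightarrow> 'v \<Rightarrow> 'v) \<Rightarrow> (nat \<Rightarrow> 'v \<Rightarrow> 'v)
   \<Rightarrow> 'v set \<Rightarrow> 'v set \<Rightarrow> bool" where
  "weyl_super_module m n sc T Dt X Dx V0 V1 \<longleftrightarrow>
     vector_space sc \<and>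
     \<comment> \<open>grading: V = V0 \<oplus> V1\<close>
     module.subspace sc V0 \<and> module.subspace sc V1 \<and> V0 \<inter> V1 = {0} \<and>
     (\<forall>v. \<exists>a\<in>V0. \<exists>b\<in>V1. v = a + b) \<and>
     \<comment> \<open>generators act linearly\<close>
     (\<forall>i<m. Vector_Spaces.linear sc sc (T i) \<and> Vector_Spaces.linear sc sc (Dt i)) \<and>
     (\<forall>i<n. Vector_Spaces.linear sc sc (X i) \<and> Vector_Spaces.linear sc sc (Dx i)) \<and>
     \<comment> \<open>parity of the generators\<close>
     (\<forall>i<m. T i ` V0 \<subseteq> V0 \<and> T i ` V1 \<subseteq> V1 \<and> Dt i ` V0 \<subseteq> V0 \<and> Dt i ` V1 \<subseteq> V1) \<and>
     (\<forall>i<n. X i ` V0 \<subseteq> V1 \<and> X i ` V1 \<subseteq> V0 \<and> Dx i ` V0 \<subseteq> V1 \<and> Dx i ` V1 \<subseteq> V0) \<and>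
     \<comment> \<open>even-even relations\<close>
     (\<forall>i<m. \<forall>j<m. \<forall>v.
        T i (T j v) = T j (T i v) \<and> Dt i (Dt j v) = Dt j (Dt i v) \<and>
        Dt i (T j v) - T j (Dt i v) = (if i = j then v else 0)) \<and>
     \<comment> \<open>odd-odd relations (anticommutators)\<close>
     (\<forall>i<n. \<forall>j<n. \<forall>v.
        X i (X j v) + X j (X i v) = 0 \<and> Dx i (Dx j v) + Dx j (Dx i v) = 0 \<and>
        Dx i (X j v) + X j (Dx i v) = (if i = j then v else 0)) \<and>
     \<comment> \<open>even-odd relations (commutators)\<close>
     (\<forall>i<m. \<forall>j<n. \<forall>v.
        T i (X j v) = X j (T i v) \<and> T i (Dx j v) = Dx j (T i v) \<and>
        Dt i (X j v) = X j (Dt i v) \<and> Dt i (Dx j v) = Dx j (Dt i v))"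

definition weyl_invariant_subspace ::
  "nat \<Rightarrow> nat \<Rightarrow> (complex \<Rightarrow> 'v::ab_group_add \<Rightarrow> 'v)
   \<Rightarrow> (nat \<Rightarrow> 'v \<Rightarrow> 'v) \<Rightarrow> (nat \<Rightarrow> 'v \<Rightarrow> 'v) \<Rightarrow> (nat \<Rightarrow> 'v \<Rightarrow> 'v) \<Rightarrow> (nat \<Rightarrow> 'v \<Rightarrow> 'v)
   \<Rightarrow> 'v set \<Rightarrow> bool" where
  "weyl_invariant_subspace m n sc T Dt X Dx W \<longleftrightarrow>
     module.subspace sc W \<and>
     (\<forall>i<m. T i ` W \<subseteq> W \<and> Dt i ` W \<subseteq> W) \<and>
     (\<forall>i<n. X i ` W \<subseteq> W \<and> Dx i ` W \<subseteq> W)"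

definition weyl_graded_submodule ::
  "nat \<Rightarrow> nat \<Rightarrow> (complex \<Rightarrow> 'v::ab_group_add \<Rightarrow> 'v)
   \<Rightarrow> (nat \<Rightarrow> 'v \<Rightarrow> 'v) \<Rightarrow> (nat \<Rightarrow> 'v \<Rightarrow> 'v) \<Rightarrow> (nat \<Rightarrow> 'v \<Rightarrow> 'v) \<Rightarrow> (nat \<Rightarrow> 'v \<Rightarrow> 'v)
   \<Rightarrow> 'v set \<Rightarrow> 'v set \<Rightarrow> 'v set \<Rightarrow> bool" where
  "weyl_graded_submodule m n sc T Dt X Dx V0 V1 W \<longleftrightarrow>
     weyl_invariant_subspace m n sc T Dt X Dx W \<and>
     (\<forall>w\<in>W. \<exists>a\<in>W \<inter> V0. \<exists>b\<in>W \<inter> V1. w = a + b)"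

definition weyl_simple ::
  "nat \<Rightarrow> nat \<Rightarrow> (complex \<Rightarrow> 'v::ab_group_add \<Rightarrow> 'v)
   \<Rightarrow> (nat \<Rightarrow> 'v \<Rightarrow> 'v) \<Rightarrow> (nat \<Rightarrow> 'v \<Rightarrow> 'v) \<Rightarrow> (nat \<Rightarrow> 'v \<Rightarrow> 'v) \<Rightarrow> (nat \<Rightarrow> 'v \<Rightarrow> 'v)
   \<Rightarrow> 'v set \<Rightarrow> 'v set \<Rightarrow> bool" where
  "weyl_simple m n sc T Dt X Dx V0 V1 \<longleftrightarrow>
     weyl_super_module m n sc T Dt X Dx V0 V1 \<and>
     (UNIV :: 'v set) \<noteq> {0} \<and>
     (\<forall>W. weyl_graded_submodule m n sc T Dt X Dx V0 V1 W \<longrightarrow> W = {0} \<or> W = UNIV)"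

end

theory Submission
  imports Defs
begin

text \<open>For each odd pair the operator \<open>[\<partial>\<^sub>\<xi>\<^sub>k, \<xi>\<^sub>k] = 1 - 2\<xi>\<^sub>k\<partial>\<^sub>\<xi>\<^sub>k\<close> is an involution
  anticommuting with \<open>\<xi>\<^sub>k, \<partial>\<^sub>\<xi>\<^sub>k\<close> and commuting with all other generators. Their product,
  the Klein operator \<open>c\<close>, therefore commutes with the even and anticommutes with the odd
  generators, exactly like the parity operator \<open>P\<close> of the grading. Hence \<open>cP\<close> is an even module
  endomorphism with \<open>(cP)\<^sup>2 = 1\<close>, and its two eigenspaces are graded submodules decomposing
  \<open>V\<close>. By simplicity one of them is all of \<open>V\<close>, i.e. \<open>c = \<plusminus>P\<close>. Every invariant subspace is
  stable under \<open>c\<close>, hence under \<open>P\<close>, hence graded, and simplicity applies again.\<close>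

lemma scale_half_double:
  assumes "vector_space (s :: 'a::field_char_0 \<Rightarrow> 'b::ab_group_add \<Rightarrow> 'b)"
  shows "s (1/2) (v + v) = v"
proof -
  interpret vector_space s by (fact assms)
  have "s (1/2) (v + v) = s (1/2 + 1/2) v"
    by (simp only: scale_right_distrib scale_left_distrib)
  then show ?thesis by simp
qed

definition commutator :: "('a \<Rightarrow> 'a) \<Rightarrow> ('a \<Rightarrow> 'a) \<Rightarrow> 'a \<Rightarrow> 'a::minus" where
  "commutator f g v = f (g v) - g (f v)"

lemma module_hom_commutator:
  "module_hom s s f \<Longrightarrow> module_hom s s g \<Longrightarrow> module_hom s s (commutator f g)"
proof -
  assume homs: "module_hom s s f" "module_hom s s g"
  then interpret module_pair s s by (simp add: module_pair_def module_hom_def)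
  from homs have "module_hom s s (\<lambda>v. (f \<circ> g) v - (g \<circ> f) v)"
    by (intro module_hom_sub module_hom_compose)
  then show ?thesis by (simp add: commutator_def[abs_def])
qed

lemma commutator_anticommute_left:
  assumes "module_hom s s f" "module_hom s s g" "\<And>v. f (f v) = 0"
  shows "commutator f g (f v) = - f (commutator f g v)"
  using assms by (simp add: commutator_def module_hom.diff module_hom.zero)

lemma commutator_anticommute_right:
  assumes "module_hom s s f" "module_hom s s g" "\<And>v. g (g v) = 0"
  shows "commutator f g (g v) = - g (commutator f g v)"
  using assms by (simp add: commutator_def module_hom.diff module_hom.zero)

lemma commutator_commute:
  assumes "module_hom s s h" "\<And>v. h (f v) = f (h v)" "\<And>v. h (g v) = g (h v)"
  shows "commutator f g (h v) = h (commutator f g v)"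
  using assms by (simp add: commutator_def module_hom.diff)

lemma commutator_commute_if_anticommute:
  assumes "module_hom s s f" "module_hom s s g" "module_hom s s h"
    and "\<And>v. h (f v) = - f (h v)" "\<And>v. h (g v) = - g (h v)"
  shows "commutator f g (h v) = h (commutator f g v)"
proof -
  have "f (g (h v)) = h (f (g v))" "g (f (h v)) = h (g (f v))"
    using assms by (simp_all add: module_hom.neg)
  then show ?thesis using assms(3) by (simp add: commutator_def module_hom.diff)
qed

lemma commutator_involutive:
  assumes "module_hom s s f" "module_hom s s g"
    and "\<And>v. f (f v) = 0" "\<And>v. g (g v) = 0" "\<And>v. f (g v) + g (f v) = v"
  shows "commutator f g (commutator f g v) = v"
proof -
  have gfg: "g (f (g v)) = g v" and fgf: "f (g (f v)) = f v"
    using assms(5)[of "g v"] assms(5)[of "f v"] assms(3,4)[of v] assms(1,2)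
    by (simp_all add: module_hom.zero add.commute)
  have "commutator f g (commutator f g v) = f (g (f (g v))) + g (f (g (f v)))"
    using assms by (simp add: commutator_def module_hom.diff module_hom.zero module_hom.neg)
  also have "\<dots> = v" using gfg fgf assms(5) by simp
  finally show ?thesis .
qed

locale weyl_module =
  fixes m n :: nat
    and sc :: "complex \<Rightarrow> 'v::ab_group_add \<Rightarrow> 'v"
    and T Dt X Dx :: "nat \<Rightarrow> 'v \<Rightarrow> 'v"
    and V0 V1 :: "'v set"
  assumes weyl_super_module: "weyl_super_module m n sc T Dt X Dx V0 V1"
begin

sublocale vector_space sc
  using weyl_super_module by (simp add: weyl_super_module_def)

lemma subspace_V0: "subspace V0" and subspace_V1: "subspace V1"
  and V0_inter_V1: "V0 \<inter> V1 = {0}" and grading: "\<exists>a\<in>V0. \<exists>b\<in>V1. v = a + b"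
  using weyl_super_module by (simp_all add: weyl_super_module_def)

lemma module_hom_T: "i < m \<Longrightarrow> module_hom sc sc (T i)"
  and module_hom_Dt: "i < m \<Longrightarrow> module_hom sc sc (Dt i)"
  and module_hom_X: "j < n \<Longrightarrow> module_hom sc sc (X j)"
  and module_hom_Dx: "j < n \<Longrightarrow> module_hom sc sc (Dx j)"
  using weyl_super_module by (simp_all add: weyl_super_module_def module_hom_iff_linear)

lemma X_V0: "j < n \<Longrightarrow> a \<in> V0 \<Longrightarrow> X j a \<in> V1"
  and X_V1: "j < n \<Longrightarrow> b \<in> V1 \<Longrightarrow> X j b \<in> V0"
  and Dx_V0: "j < n \<Longrightarrow> a \<in> V0 \<Longrightarrow> Dx j a \<in> V1"
  and Dx_V1: "j < n \<Longrightarrow> b \<in> V1 \<Longrightarrow> Dx j b \<in> V0"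
  and T_V0: "i < m \<Longrightarrow> a \<in> V0 \<Longrightarrow> T i a \<in> V0"
  and T_V1: "i < m \<Longrightarrow> b \<in> V1 \<Longrightarrow> T i b \<in> V1"
  and Dt_V0: "i < m \<Longrightarrow> a \<in> V0 \<Longrightarrow> Dt i a \<in> V0"
  and Dt_V1: "i < m \<Longrightarrow> b \<in> V1 \<Longrightarrow> Dt i b \<in> V1"
  using weyl_super_module unfolding weyl_super_module_def image_subset_iff by simp_all

lemma X_X_anticommute: "i < n \<Longrightarrow> j < n \<Longrightarrow> X i (X j v) + X j (X i v) = 0"
  and Dx_Dx_anticommute: "i < n \<Longrightarrow> j < n \<Longrightarrow> Dx i (Dx j v) + Dx j (Dx i v) = 0"
  and Dx_X_anticommute: "i < n \<Longrightarrow> j < n \<Longrightarrow> Dx i (X j v) + X j (Dx i v) = (if i = j then v else 0)"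
  using weyl_super_module unfolding weyl_super_module_def by simp_all

lemma T_X_commute: "i < m \<Longrightarrow> j < n \<Longrightarrow> T i (X j v) = X j (T i v)"
  and T_Dx_commute: "i < m \<Longrightarrow> j < n \<Longrightarrow> T i (Dx j v) = Dx j (T i v)"
  and Dt_X_commute: "i < m \<Longrightarrow> j < n \<Longrightarrow> Dt i (X j v) = X j (Dt i v)"
  and Dt_Dx_commute: "i < m \<Longrightarrow> j < n \<Longrightarrow> Dt i (Dx j v) = Dx j (Dt i v)"
  using weyl_super_module unfolding weyl_super_module_def by simp_all

lemma double_eq_zero: "(v::'v) + v = 0 \<Longrightarrow> v = 0"
  using scale_half_double[OF vector_space_axioms, where v = v] by simp

lemma X_X_zero: "j < n \<Longrightarrow> X j (X j v) = 0"
  using X_X_anticommute[of j j v] double_eq_zero by blast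

lemma Dx_Dx_zero: "j < n \<Longrightarrow> Dx j (Dx j v) = 0"
  using Dx_Dx_anticommute[of j j v] double_eq_zero by blast

lemma
  assumes "j < n" "k < n" "j \<noteq> k"
  shows X_X_anticommute_ne: "X j (X k v) = - X k (X j v)"
    and X_Dx_anticommute_ne: "X j (Dx k v) = - Dx k (X j v)"
    and Dx_X_anticommute_ne: "Dx j (X k v) = - X k (Dx j v)"
    and Dx_Dx_anticommute_ne: "Dx j (Dx k v) = - Dx k (Dx j v)"
  using assms X_X_anticommute[of j k v] Dx_X_anticommute[of k j v] Dx_X_anticommute[of j k v]
    Dx_Dx_anticommute[of j k v]
  by (simp_all add: eq_neg_iff_add_eq_0 add.commute)

lemma module_hom_commutator_odd: "k < n \<Longrightarrow> module_hom sc sc (commutator (Dx k) (X k))"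
  by (simp add: module_hom_commutator module_hom_Dx module_hom_X)

lemma commutator_odd_involutive:
  assumes "k < n"
  shows "commutator (Dx k) (X k) (commutator (Dx k) (X k) v) = v"
  using Dx_X_anticommute[OF assms assms]
  by (intro commutator_involutive[where f = "Dx k" and g = "X k",
        OF module_hom_Dx module_hom_X Dx_Dx_zero X_X_zero] assms) simp

lemma commutator_odd_T:
  assumes k: "k < n" and i: "i < m"
  shows "commutator (Dx k) (X k) (T i v) = T i (commutator (Dx k) (X k) v)"
  by (rule commutator_commute[where f = "Dx k" and g = "X k" and h = "T i",
        OF module_hom_T[OF i] T_Dx_commute[OF i k] T_X_commute[OF i k]])

lemma commutator_odd_Dt:
  assumes k: "k < n" and i: "i < m"
  shows "commutator (Dx k) (X k) (Dt i v) = Dt i (commutator (Dx k) (X k) v)"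
  by (rule commutator_commute[where f = "Dx k" and g = "X k" and h = "Dt i",
        OF module_hom_Dt[OF i] Dt_Dx_commute[OF i k] Dt_X_commute[OF i k]])

lemma commutator_odd_X:
  assumes k: "k < n" and j: "j < n"
  shows "commutator (Dx k) (X k) (X j v) =
    (if j = k then - X j (commutator (Dx k) (X k) v) else X j (commutator (Dx k) (X k) v))"
proof (cases "j = k")
  case True
  then show ?thesis
    using commutator_anticommute_right[where f = "Dx k" and g = "X k",
        OF module_hom_Dx[OF k] module_hom_X[OF k] X_X_zero[OF k]] by simp
next
  case False
  then show ?thesis
    using commutator_commute_if_anticommute[where f = "Dx k" and g = "X k" and h = "X j",
        OF module_hom_Dx[OF k] module_hom_X[OF k] module_hom_X[OF j]
        X_Dx_anticommute_ne[OF j k False] X_X_anticommute_ne[OF j k False]] by simp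
qed

lemma commutator_odd_Dx:
  assumes k: "k < n" and j: "j < n"
  shows "commutator (Dx k) (X k) (Dx j v) =
    (if j = k then - Dx j (commutator (Dx k) (X k) v) else Dx j (commutator (Dx k) (X k) v))"
proof (cases "j = k")
  case True
  then show ?thesis
    using commutator_anticommute_left[where f = "Dx k" and g = "X k",
        OF module_hom_Dx[OF k] module_hom_X[OF k] Dx_Dx_zero[OF k]] by simp
next
  case False
  then show ?thesis
    using commutator_commute_if_anticommute[where f = "Dx k" and g = "X k" and h = "Dx j",
        OF module_hom_Dx[OF k] module_hom_X[OF k] module_hom_Dx[OF j]
        Dx_Dx_anticommute_ne[OF j k False] Dx_X_anticommute_ne[OF j k False]] by simp
qed

lemma commutator_odd_V0: "k < n \<Longrightarrow> a \<in> V0 \<Longrightarrow> commutator (Dx k) (X k) a \<in> V0"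
  and commutator_odd_V1: "k < n \<Longrightarrow> b \<in> V1 \<Longrightarrow> commutator (Dx k) (X k) b \<in> V1"
  unfolding commutator_def
  by (intro subspace_diff subspace_V0 subspace_V1 X_V0 X_V1 Dx_V0 Dx_V1; assumption)+

fun klein_upto :: "nat \<Rightarrow> 'v \<Rightarrow> 'v" where
  "klein_upto 0 v = v"
| "klein_upto (Suc k) v = commutator (Dx k) (X k) (klein_upto k v)"

lemma module_hom_klein_upto: "k \<le> n \<Longrightarrow> module_hom sc sc (klein_upto k)"
proof (induction k)
  case 0
  show ?case using module_hom_ident by (simp add: klein_upto.simps(1)[abs_def] module_hom_iff_linear)
next
  case (Suc k)
  have "klein_upto (Suc k) = commutator (Dx k) (X k) \<circ> klein_upto k" by (simp add: fun_eq_iff)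
  moreover have "module_hom sc sc (commutator (Dx k) (X k) \<circ> klein_upto k)"
    using Suc module_hom_commutator_odd[of k] by (auto intro: module_hom_compose)
  ultimately show ?case by (simp only:)
qed

lemma klein_upto_T: "k \<le> n \<Longrightarrow> i < m \<Longrightarrow> klein_upto k (T i v) = T i (klein_upto k v)"
  by (induction k) (simp_all add: commutator_odd_T)

lemma klein_upto_Dt: "k \<le> n \<Longrightarrow> i < m \<Longrightarrow> klein_upto k (Dt i v) = Dt i (klein_upto k v)"
  by (induction k) (simp_all add: commutator_odd_Dt)

lemma klein_upto_X:
  "k \<le> n \<Longrightarrow> j < n \<Longrightarrow>
    klein_upto k (X j v) = (if j < k then - X j (klein_upto k v) else X j (klein_upto k v))"
  by (induction k) (auto simp: commutator_odd_X module_hom.neg[OF module_hom_commutator_odd])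

lemma klein_upto_Dx:
  "k \<le> n \<Longrightarrow> j < n \<Longrightarrow>
    klein_upto k (Dx j v) = (if j < k then - Dx j (klein_upto k v) else Dx j (klein_upto k v))"
  by (induction k) (auto simp: commutator_odd_Dx module_hom.neg[OF module_hom_commutator_odd])

lemma klein_upto_involutive: "k \<le> n \<Longrightarrow> klein_upto k (klein_upto k v) = v"
proof (induction k arbitrary: v)
  case (Suc k)
  then have k: "k < n" by simp
  have "klein_upto k (commutator (Dx k) (X k) u) = commutator (Dx k) (X k) (klein_upto k u)" for u
    using k
    by (intro commutator_commute[where f = "Dx k" and g = "X k" and h = "klein_upto k",
          OF module_hom_klein_upto, symmetric])
      (simp_all add: klein_upto_X klein_upto_Dx)
  then show ?case using Suc k by (simp add: commutator_odd_involutive)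
qed simp

lemma klein_upto_V0: "k \<le> n \<Longrightarrow> a \<in> V0 \<Longrightarrow> klein_upto k a \<in> V0"
  and klein_upto_V1: "k \<le> n \<Longrightarrow> b \<in> V1 \<Longrightarrow> klein_upto k b \<in> V1"
  by (induction k) (simp_all add: commutator_odd_V0 commutator_odd_V1)

lemma klein_upto_invariant_subspace:
  assumes "weyl_invariant_subspace m n sc T Dt X Dx W"
  shows "k \<le> n \<Longrightarrow> w \<in> W \<Longrightarrow> klein_upto k w \<in> W"
proof (induction k)
  case (Suc k)
  have "subspace W" and "\<forall>i<n. X i ` W \<subseteq> W \<and> Dx i ` W \<subseteq> W"
    using assms unfolding weyl_invariant_subspace_def by auto
  with Suc show ?case by (auto simp: commutator_def image_subset_iff intro!: subspace_diff)
qed simp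

abbreviation klein :: "'v \<Rightarrow> 'v" where
  "klein \<equiv> klein_upto n"

lemma klein_X: "j < n \<Longrightarrow> klein (X j v) = - X j (klein v)"
  and klein_Dx: "j < n \<Longrightarrow> klein (Dx j v) = - Dx j (klein v)"
  by (simp_all add: klein_upto_X klein_upto_Dx)

lemma grading_unique:
  assumes "a \<in> V0" "b \<in> V1" "a' \<in> V0" "b' \<in> V1" "a + b = a' + b'"
  shows "a = a'" "b = b'"
proof -
  have "a - a' = b' - b" using assms(5) by (simp add: algebra_simps)
  moreover have "a - a' \<in> V0" "b' - b \<in> V1" using assms by (simp_all add: subspace_diff subspace_V0 subspace_V1)
  ultimately have "b' - b \<in> V0 \<inter> V1" by simp
  then have "b' - b = 0" using V0_inter_V1 by blast
  with \<open>a - a' = b' - b\<close> show "a = a'" "b = b'" by simp_all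
qed

text \<open>The \<open>s\<close>-eigenspace of \<open>klein \<circ> P\<close>, where \<open>P\<close> is the parity operator \<open>a + b \<mapsto> a - b\<close>.\<close>
definition klein_eigenspace :: "complex \<Rightarrow> 'v set" where
  "klein_eigenspace s = {a + b | a b. a \<in> V0 \<and> b \<in> V1 \<and> klein a = sc s a \<and> klein b = sc (- s) b}"

lemma klein_eigenspaceI:
  "a \<in> V0 \<Longrightarrow> b \<in> V1 \<Longrightarrow> klein a = sc s a \<Longrightarrow> klein b = sc (- s) b \<Longrightarrow> a + b \<in> klein_eigenspace s"
  unfolding klein_eigenspace_def by blast

lemma klein_eigenspaceE:
  assumes "v \<in> klein_eigenspace s"
  obtains a b where "v = a + b" "a \<in> V0" "b \<in> V1" "klein a = sc s a" "klein b = sc (- s) b"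
  using assms unfolding klein_eigenspace_def by blast

lemma klein_eigenspace_V0: "a \<in> V0 \<Longrightarrow> klein a = sc s a \<Longrightarrow> a \<in> klein_eigenspace s"
  using klein_eigenspaceI[of a 0 s] module_hom.zero[OF module_hom_klein_upto]
  by (simp add: subspace_0 subspace_V1)

lemma klein_eigenspace_V1: "b \<in> V1 \<Longrightarrow> klein b = sc (- s) b \<Longrightarrow> b \<in> klein_eigenspace s"
  using klein_eigenspaceI[of 0 b s] module_hom.zero[OF module_hom_klein_upto]
  by (simp add: subspace_0 subspace_V0)

lemma subspace_klein_eigenspace: "subspace (klein_eigenspace s)"
proof (rule subspaceI)
  show "0 \<in> klein_eigenspace s"
    using module_hom.zero[OF module_hom_klein_upto]
    by (intro klein_eigenspace_V0) (simp_all add: subspace_0 subspace_V0)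
next
  fix x y assume "x \<in> klein_eigenspace s" "y \<in> klein_eigenspace s"
  then obtain a b a' b' where ab: "x = a + b" "a \<in> V0" "b \<in> V1" "klein a = sc s a" "klein b = sc (- s) b"
    and ab': "y = a' + b'" "a' \<in> V0" "b' \<in> V1" "klein a' = sc s a'" "klein b' = sc (- s) b'"
    by (elim klein_eigenspaceE)
  have "(a + a') + (b + b') \<in> klein_eigenspace s"
    using ab ab' module_hom.add[OF module_hom_klein_upto]
    by (intro klein_eigenspaceI) (simp_all add: subspace_add subspace_V0 subspace_V1 scale_right_distrib)
  then show "x + y \<in> klein_eigenspace s" using ab ab' by (simp add: algebra_simps)
next
  fix r x assume "x \<in> klein_eigenspace s"
  then obtain a b where ab: "x = a + b" "a \<in> V0" "b \<in> V1" "klein a = sc s a" "klein b = sc (- s) b"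
    by (elim klein_eigenspaceE)
  have "sc r a + sc r b \<in> klein_eigenspace s"
    using ab module_hom.scale[OF module_hom_klein_upto]
    by (intro klein_eigenspaceI) (simp_all add: subspace_scale subspace_V0 subspace_V1 mult.commute)
  then show "sc r x \<in> klein_eigenspace s" using ab by (simp add: scale_right_distrib)
qed

lemma klein_eigenspace_closed_even:
  assumes "module_hom sc sc g" "g ` V0 \<subseteq> V0" "g ` V1 \<subseteq> V1" "\<And>v. klein (g v) = g (klein v)"
  shows "g ` klein_eigenspace s \<subseteq> klein_eigenspace s"
proof
  fix y assume "y \<in> g ` klein_eigenspace s"
  then obtain a b where ab: "y = g (a + b)" "a \<in> V0" "b \<in> V1" "klein a = sc s a" "klein b = sc (- s) b"
    by (auto elim: klein_eigenspaceE)
  have "g a + g b \<in> klein_eigenspace s"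
    using assms ab by (intro klein_eigenspaceI) (auto simp: module_hom.scale module_hom.neg)
  then show "y \<in> klein_eigenspace s" using ab assms(1) by (simp add: module_hom.add)
qed

lemma klein_eigenspace_closed_odd:
  assumes "module_hom sc sc g" "g ` V0 \<subseteq> V1" "g ` V1 \<subseteq> V0" "\<And>v. klein (g v) = - g (klein v)"
  shows "g ` klein_eigenspace s \<subseteq> klein_eigenspace s"
proof
  fix y assume "y \<in> g ` klein_eigenspace s"
  then obtain a b where ab: "y = g (a + b)" "a \<in> V0" "b \<in> V1" "klein a = sc s a" "klein b = sc (- s) b"
    by (auto elim: klein_eigenspaceE)
  have "g b + g a \<in> klein_eigenspace s"
    using assms ab by (intro klein_eigenspaceI) (auto simp: module_hom.scale module_hom.neg)
  then show "y \<in> klein_eigenspace s" using ab assms(1) by (simp add: module_hom.add add.commute)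
qed

lemma graded_submodule_klein_eigenspace:
  "weyl_graded_submodule m n sc T Dt X Dx V0 V1 (klein_eigenspace s)"
proof -
  have "weyl_invariant_subspace m n sc T Dt X Dx (klein_eigenspace s)"
    unfolding weyl_invariant_subspace_def
  proof (intro conjI allI impI subspace_klein_eigenspace)
    fix i assume i: "i < m"
    show "T i ` klein_eigenspace s \<subseteq> klein_eigenspace s"
      using i by (intro klein_eigenspace_closed_even) (auto simp: module_hom_T T_V0 T_V1 klein_upto_T)
    show "Dt i ` klein_eigenspace s \<subseteq> klein_eigenspace s"
      using i by (intro klein_eigenspace_closed_even) (auto simp: module_hom_Dt Dt_V0 Dt_V1 klein_upto_Dt)
  next
    fix j assume j: "j < n"
    show "X j ` klein_eigenspace s \<subseteq> klein_eigenspace s"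
      using j by (intro klein_eigenspace_closed_odd) (auto simp: module_hom_X X_V0 X_V1 klein_X)
    show "Dx j ` klein_eigenspace s \<subseteq> klein_eigenspace s"
      using j by (intro klein_eigenspace_closed_odd) (auto simp: module_hom_Dx Dx_V0 Dx_V1 klein_Dx)
  qed
  moreover have "\<exists>a\<in>klein_eigenspace s \<inter> V0. \<exists>b\<in>klein_eigenspace s \<inter> V1. v = a + b"
    if v: "v \<in> klein_eigenspace s" for v
  proof -
    obtain a b where ab: "v = a + b" "a \<in> V0" "b \<in> V1" "klein a = sc s a" "klein b = sc (- s) b"
      using v by (elim klein_eigenspaceE)
    have "a \<in> klein_eigenspace s" "b \<in> klein_eigenspace s"
      using ab by (simp_all add: klein_eigenspace_V0 klein_eigenspace_V1)
    then show ?thesis using ab by auto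
  qed
  ultimately show ?thesis unfolding weyl_graded_submodule_def by blast
qed

lemma klein_eq_if_klein_eigenspace_UNIV:
  assumes "klein_eigenspace s = UNIV" "a \<in> V0" "b \<in> V1"
  shows "klein (a + b) = sc s a - sc s b"
proof -
  obtain a' b' where ab': "a + b = a' + b'" "a' \<in> V0" "b' \<in> V1" "klein a' = sc s a'" "klein b' = sc (- s) b'"
    using assms(1) by (blast elim: klein_eigenspaceE)
  then have "a = a'" "b = b'" using grading_unique assms(2,3) by blast+
  then show ?thesis using ab' module_hom.add[OF module_hom_klein_upto] by simp
qed

lemma graded_if_klein_eigenspace_UNIV:
  assumes "klein_eigenspace s = UNIV" "s * s = 1" and W: "weyl_invariant_subspace m n sc T Dt X Dx W"
  shows "weyl_graded_submodule m n sc T Dt X Dx V0 V1 W"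
proof -
  have "subspace W" using W by (simp add: weyl_invariant_subspace_def)
  have "\<exists>a\<in>W \<inter> V0. \<exists>b\<in>W \<inter> V1. w = a + b" if w: "w \<in> W" for w
  proof -
    obtain a b where ab: "a \<in> V0" "b \<in> V1" "w = a + b" using grading by blast
    have parity: "sc s (klein w) = a - b"
      using klein_eq_if_klein_eigenspace_UNIV[OF assms(1) ab(1,2)] ab(3) assms(2)
      by (simp add: scale_right_diff_distrib)
    have "sc s (klein w) \<in> W"
      using klein_upto_invariant_subspace[OF W order_refl w] \<open>subspace W\<close> by (simp add: subspace_scale)
    moreover have "a + a = w + sc s (klein w)" "b + b = w - sc s (klein w)"
      using parity ab(3) by (simp_all add: algebra_simps)
    ultimately have "a + a \<in> W" "b + b \<in> W"
      using w \<open>subspace W\<close> by (simp_all add: subspace_add subspace_diff)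
    then have "sc (1/2) (a + a) \<in> W" "sc (1/2) (b + b) \<in> W"
      using \<open>subspace W\<close> by (simp_all add: subspace_scale)
    then have "a \<in> W" "b \<in> W" by (simp_all add: scale_half_double[OF vector_space_axioms])
    then show ?thesis using ab by blast
  qed
  then show ?thesis using W by (simp add: weyl_graded_submodule_def)
qed

lemma zero_if_klein_eigenspaces_zero:
  assumes "klein_eigenspace 1 = {0}" "klein_eigenspace (-1) = {0}"
  shows "(v::'v) = 0"
proof -
  have klein_sum: "klein (u + klein u) = u + klein u"
    and klein_diff: "klein (u - klein u) = - (u - klein u)" for u
    by (simp_all add: module_hom.add[OF module_hom_klein_upto] module_hom.diff[OF module_hom_klein_upto]
        klein_upto_involutive)
  have double: "u + u = (u + klein u) + (u - klein u)" for u by (simp add: algebra_simps)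
  obtain a b where ab: "a \<in> V0" "b \<in> V1" "v = a + b" using grading by blast
  have "a + klein a \<in> klein_eigenspace 1"
    by (rule klein_eigenspace_V0) (simp_all add: ab subspace_add subspace_V0 klein_upto_V0 klein_sum)
  moreover have "a - klein a \<in> klein_eigenspace (-1)"
    by (rule klein_eigenspace_V0) (simp_all add: ab subspace_diff subspace_V0 klein_upto_V0 klein_diff)
  ultimately have "a + a = 0" using assms unfolding double[of a] by simp
  have "b + klein b \<in> klein_eigenspace (-1)"
    by (rule klein_eigenspace_V1) (simp_all add: ab subspace_add subspace_V1 klein_upto_V1 klein_sum)
  moreover have "b - klein b \<in> klein_eigenspace 1"
    by (rule klein_eigenspace_V1) (simp_all add: ab subspace_diff subspace_V1 klein_upto_V1 klein_diff)
  ultimately have "b + b = 0" using assms unfolding double[of b] by simp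
  with \<open>a + a = 0\<close> have "a = 0" "b = 0" using double_eq_zero by blast+
  then show ?thesis using ab(3) by simp
qed

end

theorem lemma3p3:
  fixes m n :: nat
    and sc :: "complex \<Rightarrow> 'v::ab_group_add \<Rightarrow> 'v"
    and T Dt X Dx :: "nat \<Rightarrow> 'v \<Rightarrow> 'v"
    and V0 V1 :: "'v set"
  assumes "(m, n) \<noteq> (0, 0)"
    and "weyl_simple m n sc T Dt X Dx V0 V1"
    and "weyl_invariant_subspace m n sc T Dt X Dx W"
  shows "W = {0} \<or> W = UNIV"
proof -
  have simple: "\<And>W. weyl_graded_submodule m n sc T Dt X Dx V0 V1 W \<Longrightarrow> W = {0} \<or> W = UNIV"
    using assms(2) by (simp add: weyl_simple_def)
  interpret weyl_module m n sc T Dt X Dx V0 V1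
    using assms(2) by (simp add: weyl_module_def weyl_simple_def)
  have eigenspace_trivial: "klein_eigenspace s = {0} \<or> klein_eigenspace s = UNIV" for s
    by (rule simple[OF graded_submodule_klein_eigenspace])
  show ?thesis
  proof (cases "klein_eigenspace 1 = UNIV \<or> klein_eigenspace (-1) = UNIV")
    case True
    then obtain s where "klein_eigenspace s = UNIV" "s * s = 1" by force
    then show ?thesis using simple graded_if_klein_eigenspace_UNIV assms(3) by blast
  next
    case False
    then have "v = 0" for v :: 'v
      using eigenspace_trivial zero_if_klein_eigenspaces_zero by blast
    moreover have "0 \<in> W" using assms(3) by (simp add: weyl_invariant_subspace_def subspace_0)
    ultimately show ?thesis by auto
  qed
qed

end
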